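(* For $n\in\mathbb{N}$ let $h=2/\sqrt n$ and $x_k=-\sqrt n+\frac{2k}{\sqrt n}$ for $k=0,1,\dots,n$. For $\mu\in\mathbb{R}$ and $s>0$ define $$I_d=h\sum_{k=0}^n\exp\Big\{-\frac{s^2}{2}(x_k-\mu)^2\Big\},\qquad I_c=\int_{-\infty}^{\infty}\exp\Big\{-\frac{s^2}{2}(x-\mu)^2\Big\}dx.$$ Then $I_d\le\big(1+\frac{\eta s^2}{n}\big)I_c$, where $\eta=3/\sqrt{8\pi e}\le0.37$. *)

theory Defs
  imports "HOL-Analysis.Analysis"
begin

definition grid_h :: "nat \<Rightarrow> real" where
  "grid_h n = 2 / sqrt (real n)"

definition grid_x :: "nat \<Rightarrow> nat \<Rightarrow> real" where
  "grid_x n k = - sqrt (real n) + 2 * real k / sqrt (real n)"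

definition I_d :: "nat \<Rightarrow> real \<Rightarrow> real \<Rightarrow> real" where
  "I_d n \<mu> s = grid_h n * (\<Sum>k=0..n. exp (- (s^2 / 2) * (grid_x n k - \<mu>)^2))"

definition I_c :: "real \<Rightarrow> real \<Rightarrow> real" where
  "I_c \<mu> s = integral UNIV (\<lambda>x. exp (- (s^2 / 2) * (x - \<mu>)^2))"

definition eta :: real where
  "eta = 3 / sqrt (8 * pi * exp 1)"

end

theory Submission
  imports Defs "HOL-Probability.Distributions"
begin

text \<open>
  Let \<open>a = 1/\<surd>n\<close>, so that the grid points \<open>x\<^sub>k\<close> are the centres of the cells
  \<open>[x\<^sub>k - a, x\<^sub>k + a]\<close>, which tile an interval and have width \<open>h = 2a\<close>.
  It suffices to show \<open>2a f(c) \<le> (1 + \<eta> s\<^sup>2 a\<^sup>2) \<integral>\<^sub>c\<^sub>e\<^sub>l\<^sub>l f\<close> for each cell with centre \<open>c\<close>.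
  Writing \<open>f(x) = f(c) g(x) exp(-k(x - c))\<close> with \<open>g\<close> the Gaussian centred at \<open>c\<close> and using
  \<open>exp y \<ge> 1 + y\<close>, the linear term integrates to zero over the symmetric cell, so
  \<open>\<integral>\<^sub>c\<^sub>e\<^sub>l\<^sub>l f \<ge> f(c) \<integral>\<^sub>c\<^sub>e\<^sub>l\<^sub>l g\<close>. A third order Taylor lower bound for \<open>g\<close> then gives
  \<open>2a \<le> (1 + s\<^sup>2 a\<^sup>2/3) \<integral>\<^sub>c\<^sub>e\<^sub>l\<^sub>l g\<close>, and \<open>\<eta> \<ge> 1/3\<close>.
\<close>

abbreviation gauss :: "real \<Rightarrow> real \<Rightarrow> real \<Rightarrow> real" where
  "gauss s \<mu> x \<equiv> exp (- (s^2 / 2) * (x - \<mu>)^2)"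

lemma eta_bounds: "1/3 \<le> eta" "eta \<le> 0.37"
proof -
  have e: "\<bar>exp 1 - 5837465777 / 2147483648\<bar> \<le> (inverse (2 ^ 32) :: real)"
    by (rule e_approx_32)
  then have e1: "2.718 \<le> exp (1::real)" "exp (1::real) \<le> 2.719"
    unfolding abs_le_iff by (simp_all add: field_simps)
  have p: "3.141592653588 \<le> pi" "pi \<le> 3.1415926535899"
    by (rule pi_approx)+
  have "pi * exp 1 \<le> 3.15 * 2.72"
    using e1 p by (intro mult_mono) auto
  then have "sqrt (8 * pi * exp 1) \<le> sqrt (9^2)"
    by (intro real_sqrt_le_mono) simp
  then show "1/3 \<le> eta"
    unfolding eta_def by (simp add: field_simps)
  have "3.14 * 2.718 \<le> pi * exp 1"
    using e1 p by (intro mult_mono) auto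
  then have "8.2^2 \<le> 8 * pi * exp 1"
    by (simp add: power2_eq_square)
  then have "8.2 \<le> sqrt (8 * pi * exp 1)"
    using real_le_rsqrt by blast
  then show "eta \<le> 0.37"
    unfolding eta_def by (simp add: field_simps)
qed

lemma gauss_integrable_on_UNIV:
  assumes "s > 0"
  shows "gauss s \<mu> integrable_on UNIV"
proof -
  have "(\<lambda>x. sqrt (2 * pi) / s * normal_density \<mu> (1 / s) x) = gauss s \<mu>"
  proof
    fix x
    have "sqrt (2 * pi * (1 / s)^2) = sqrt (2 * pi) / s"
      using assms by (simp add: real_sqrt_mult real_sqrt_divide power_divide)
    moreover have "- ((x - \<mu>)^2) / (2 * (1 / s)^2) = - (s^2 / 2) * (x - \<mu>)^2"
      using assms by (simp add: field_simps)
    ultimately show "sqrt (2 * pi) / s * normal_density \<mu> (1 / s) x = gauss s \<mu> x"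
      using assms unfolding normal_density_def by simp
  qed
  moreover have "integrable lborel (\<lambda>x. sqrt (2 * pi) / s * normal_density \<mu> (1 / s) x)"
    using assms by (intro integrable_mult_right integrable_normal_density) simp
  ultimately show ?thesis
    using integrable_on_lborel by metis
qed

lemma exp_minus_ge_taylor3:
  fixes v :: real
  assumes "v \<ge> 0"
  shows "1 - v + v^2 / 2 - v^3 / 6 \<le> exp (- v)"
proof -
  obtain t where t: "exp (- v) = (\<Sum>m<4. (- v) ^ m / fact m) + exp t / fact 4 * (- v) ^ 4"
    using Maclaurin_exp_le[of "- v" 4] by blast
  have "(\<Sum>m<4. (- v) ^ m / fact m) = 1 - v + v^2 / 2 - v^3 / 6"
    by (simp add: eval_nat_numeral fact_numeral)
  moreover have "exp t / fact 4 * (- v) ^ 4 \<ge> 0"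
    by simp
  ultimately show ?thesis
    using t by linarith
qed

lemma has_integral_gauss_taylor3_poly:
  fixes b c s :: real
  assumes "b > 0"
  shows "((\<lambda>x. 1 - s^2 * (x - c)^2 / 2 + s^4 * (x - c)^4 / 8 - s^6 * (x - c)^6 / 48)
          has_integral 2 * (b - s^2 * b^3 / 6 + s^4 * b^5 / 40 - s^6 * b^7 / 336)) {c - b..c + b}"
proof -
  let ?P = "\<lambda>x. (x - c) - s^2 * (x - c)^3 / 6 + s^4 * (x - c)^5 / 40 - s^6 * (x - c)^7 / 336"
  have "(?P has_real_derivative
          1 - s^2 * (x - c)^2 / 2 + s^4 * (x - c)^4 / 8 - s^6 * (x - c)^6 / 48) (at x within S)"
    for x S
    by (auto intro!: derivative_eq_intros simp: field_simps)
  then have "((\<lambda>x. 1 - s^2 * (x - c)^2 / 2 + s^4 * (x - c)^4 / 8 - s^6 * (x - c)^6 / 48)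
               has_integral ?P (c + b) - ?P (c - b)) {c - b..c + b}"
    using assms by (intro fundamental_theorem_of_calculus)
      (simp_all add: has_real_derivative_iff_has_vector_derivative[symmetric])
  moreover have "?P (c + b) - ?P (c - b) = 2 * (b - s^2 * b^3 / 6 + s^4 * b^5 / 40 - s^6 * b^7 / 336)"
    by (simp add: field_simps)
  ultimately show ?thesis
    by metis
qed

lemma has_integral_gauss_first_moment_symmetric:
  fixes b c s :: real
  assumes "b > 0" "s > 0"
  shows "((\<lambda>x. gauss s c x * (x - c)) has_integral 0) {c - b..c + b}"
proof -
  let ?P = "\<lambda>x. - gauss s c x / s^2"
  have "(?P has_real_derivative gauss s c x * (x - c)) (at x within S)" for x S
    using assms by (auto intro!: derivative_eq_intros simp: field_simps)
  then have "((\<lambda>x. gauss s c x * (x - c)) has_integral ?P (c + b) - ?P (c - b)) {c - b..c + b}"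
    using assms by (intro fundamental_theorem_of_calculus)
      (simp_all add: has_real_derivative_iff_has_vector_derivative[symmetric])
  then show ?thesis
    by simp
qed

lemma gauss_integral_cell_ge_centred:
  fixes a c s \<mu> :: real
  assumes "a > 0" "s > 0"
  shows "gauss s \<mu> c * integral {c - a..c + a} (gauss s c) \<le> integral {c - a..c + a} (gauss s \<mu>)"
proof -
  define k where "k = s^2 * (c - \<mu>)"
  define F where "F = gauss s \<mu> c"
  have g_int: "(gauss s c has_integral integral {c - a..c + a} (gauss s c)) {c - a..c + a}"
    by (intro integrable_integral integrable_continuous_interval continuous_intros)
  have f_int: "(gauss s \<mu> has_integral integral {c - a..c + a} (gauss s \<mu>)) {c - a..c + a}"
    by (intro integrable_integral integrable_continuous_interval continuous_intros)
  have lower_int: "((\<lambda>x. F * (gauss s c x - k * (gauss s c x * (x - c))))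
      has_integral F * (integral {c - a..c + a} (gauss s c) - k * 0)) {c - a..c + a}"
    by (intro has_integral_mult_right has_integral_diff g_int
        has_integral_gauss_first_moment_symmetric assms)
  have "F * (gauss s c x - k * (gauss s c x * (x - c))) \<le> gauss s \<mu> x" for x
  proof -
    have "- (s^2 / 2) * (x - \<mu>)^2 = - (s^2 / 2) * (c - \<mu>)^2 + - (s^2 / 2) * (x - c)^2 + - k * (x - c)"
      by (simp add: k_def field_simps power2_eq_square)
    then have factor: "gauss s \<mu> x = F * gauss s c x * exp (- k * (x - c))"
      by (simp add: F_def exp_add[symmetric])
    have "F * gauss s c x * (1 - k * (x - c)) \<le> F * gauss s c x * exp (- k * (x - c))"
      using exp_ge_add_one_self[of "- k * (x - c)"] by (intro mult_left_mono) (auto simp: F_def)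
    then show ?thesis
      using factor by (simp add: algebra_simps)
  qed
  then have "F * (integral {c - a..c + a} (gauss s c) - k * 0) \<le> integral {c - a..c + a} (gauss s \<mu>)"
    using has_integral_le[OF lower_int f_int] by blast
  then show ?thesis
    by (simp add: F_def)
qed

lemma gauss_integral_centred_ge_taylor3:
  fixes a b c s :: real
  assumes "0 < b" "b \<le> a"
  shows "2 * (b - s^2 * b^3 / 6 + s^4 * b^5 / 40 - s^6 * b^7 / 336) \<le> integral {c - a..c + a} (gauss s c)"
proof -
  have g_int: "(gauss s c has_integral integral {c - b..c + b} (gauss s c)) {c - b..c + b}"
    by (intro integrable_integral integrable_continuous_interval continuous_intros)
  have "1 - s^2 * (x - c)^2 / 2 + s^4 * (x - c)^4 / 8 - s^6 * (x - c)^6 / 48 \<le> gauss s c x" for x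
    using exp_minus_ge_taylor3[of "s^2 * (x - c)^2 / 2"]
    by (simp add: power_mult_distrib field_simps flip: power_mult)
  then have "2 * (b - s^2 * b^3 / 6 + s^4 * b^5 / 40 - s^6 * b^7 / 336) \<le> integral {c - b..c + b} (gauss s c)"
    using has_integral_le[OF has_integral_gauss_taylor3_poly[OF assms(1)] g_int] by blast
  also have "\<dots> \<le> integral {c - a..c + a} (gauss s c)"
    using assms by (intro integral_subset_le integrable_continuous_interval continuous_intros) auto
  finally show ?thesis .
qed

lemma one_le_taylor3_factor:
  fixes e t :: real
  assumes "0 \<le> t" "t \<le> 4" "e \<ge> 1/3"
  shows "1 \<le> (1 + e * t) * (1 - t / 6 + t^2 / 40 - t^3 / 336)"
proof -
  have t2: "t^2 \<le> 4 * t"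
    using assms by (simp add: power2_eq_square mult_right_mono)
  have t3: "t^3 \<le> 4 * t^2"
    using assms mult_right_mono[of t 4 "t * t"] by (simp add: power3_eq_cube power2_eq_square)
  have factor_nonneg: "0 \<le> 1 - t / 6 + t^2 / 40 - t^3 / 336"
    using t2 t3 assms zero_le_power2[of t] by linarith
  have "(1 + t / 3) * (1 - t / 6 + t^2 / 40 - t^3 / 336)
        = 1 + t * (1/6 - 11 * t / 360 + 3 * t^2 / 560 - t^3 / 1008)"
    by (simp add: field_simps power2_eq_square power3_eq_cube power4_eq_xxxx)
  moreover have "0 \<le> 1/6 - 11 * t / 360 + 3 * t^2 / 560 - t^3 / 1008"
    using t2 t3 assms zero_le_power2[of t] by linarith
  then have "0 \<le> t * (1/6 - 11 * t / 360 + 3 * t^2 / 560 - t^3 / 1008)"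
    using assms(1) by simp
  ultimately have "1 \<le> (1 + t / 3) * (1 - t / 6 + t^2 / 40 - t^3 / 336)"
    by linarith
  also have "\<dots> \<le> (1 + e * t) * (1 - t / 6 + t^2 / 40 - t^3 / 336)"
    using mult_right_mono[OF assms(3) assms(1)] factor_nonneg by (intro mult_right_mono) auto
  finally show ?thesis .
qed

lemma cell_width_le_gauss_integral:
  fixes a c e s :: real
  assumes "a > 0" "s > 0" "e \<ge> 1/3"
  shows "2 * a \<le> (1 + e * s^2 * a^2) * integral {c - a..c + a} (gauss s c)"
proof (cases "s * a \<le> 2")
  case True
  define t where "t = s^2 * a^2"
  have "t \<le> 2^2"
    using True assms power_mono[of "s * a" 2 2] by (simp add: t_def power_mult_distrib)
  then have "2 * a * 1 \<le> 2 * a * ((1 + e * t) * (1 - t / 6 + t^2 / 40 - t^3 / 336))"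
    using one_le_taylor3_factor[of t e] assms by (intro mult_left_mono) (auto simp: t_def)
  also have "\<dots> = (1 + e * s^2 * a^2) * (2 * (a - s^2 * a^3 / 6 + s^4 * a^5 / 40 - s^6 * a^7 / 336))"
    by (simp add: t_def field_simps power2_eq_square power3_eq_cube eval_nat_numeral)
  also have "\<dots> \<le> (1 + e * s^2 * a^2) * integral {c - a..c + a} (gauss s c)"
    using gauss_integral_centred_ge_taylor3[OF assms(1) order_refl, where c=c and s=s] assms
    by (intro mult_left_mono) auto
  finally show ?thesis
    by simp
next
  case False
  \<comment> \<open>the Taylor bound is only useful up to \<open>s b = 2\<close>, where it equals \<open>76/(35 s)\<close>\<close>
  define b where "b = 2 / s"
  have b: "0 < b" "b \<le> a"
    using False assms by (simp_all add: b_def field_simps)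
  have b_value: "2 * (b - s^2 * b^3 / 6 + s^4 * b^5 / 40 - s^6 * b^7 / 336) = 76 / (35 * s)"
    using assms by (simp add: b_def field_simps eval_nat_numeral)
  have "0 \<le> (s * a - 105/76)^2"
    by simp
  then have "70 * (s * a) \<le> 76 * (1 + (s * a)^2 / 3)"
    by (simp add: power2_diff power2_eq_square field_simps)
  also have "\<dots> \<le> 76 * (1 + e * (s * a)^2)"
    using mult_right_mono[OF assms(3), of "(s * a)^2"] by simp
  finally have "2 * a \<le> (1 + e * s^2 * a^2) * (76 / (35 * s))"
    using assms by (simp add: field_simps power_mult_distrib)
  also have "\<dots> \<le> (1 + e * s^2 * a^2) * integral {c - a..c + a} (gauss s c)"
    using gauss_integral_centred_ge_taylor3[OF b, where c=c and s=s] b_value assms by (intro mult_left_mono) auto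
  finally show ?thesis .
qed

lemma sum_integral_adjacent_cells:
  fixes f :: "real \<Rightarrow> 'a::banach"
  assumes "continuous_on UNIV f" "a > 0"
  shows "(\<Sum>k=0..m. integral {\<alpha> + 2 * real k * a - a..\<alpha> + 2 * real k * a + a} f)
         = integral {\<alpha> - a..\<alpha> + 2 * real m * a + a} f"
proof (induction m)
  case 0
  show ?case
    by simp
next
  case (Suc m)
  define \<beta> where "\<beta> = \<alpha> + 2 * real m * a + a"
  have "\<alpha> - a \<le> \<beta>" "\<beta> \<le> \<beta> + 2 * a"
    using assms(2) by (simp_all add: \<beta>_def)
  then have combine: "integral {\<alpha> - a..\<beta>} f + integral {\<beta>..\<beta> + 2 * a} f
      = integral {\<alpha> - a..\<beta> + 2 * a} f"
    by (intro Henstock_Kurzweil_Integration.integral_combine integrable_continuous_interval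
        continuous_on_subset[OF assms(1)]) auto
  have shift: "\<alpha> + 2 * real (Suc m) * a - a = \<beta>" "\<alpha> + 2 * real (Suc m) * a + a = \<beta> + 2 * a"
    by (simp_all add: \<beta>_def algebra_simps)
  show ?case
    unfolding sum.atLeast0_atMost_Suc Suc.IH \<beta>_def[symmetric] shift by (rule combine)
qed

lemma cell_width_mul_gauss_le_integral:
  fixes a c e s \<mu> :: real
  assumes "a > 0" "s > 0" "e \<ge> 1/3"
  shows "2 * a * gauss s \<mu> c \<le> (1 + e * s^2 * a^2) * integral {c - a..c + a} (gauss s \<mu>)"
proof -
  have "0 \<le> 1 + e * s^2 * a^2"
    using assms(3) by (intro add_nonneg_nonneg mult_nonneg_nonneg) auto
  have "2 * a * gauss s \<mu> c \<le> (1 + e * s^2 * a^2) * integral {c - a..c + a} (gauss s c) * gauss s \<mu> c"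
    using cell_width_le_gauss_integral[OF assms, where c=c] by (intro mult_right_mono) auto
  also have "\<dots> = (1 + e * s^2 * a^2) * (gauss s \<mu> c * integral {c - a..c + a} (gauss s c))"
    by (simp only: ac_simps)
  also have "\<dots> \<le> (1 + e * s^2 * a^2) * integral {c - a..c + a} (gauss s \<mu>)"
    using gauss_integral_cell_ge_centred[OF assms(1,2), where c=c and \<mu>=\<mu>] \<open>0 \<le> 1 + e * s^2 * a^2\<close>
    by (rule mult_left_mono)
  finally show ?thesis .
qed

theorem mainTheorem15:
  fixes n :: nat and \<mu> s :: real
  assumes "n \<ge> 1" and "s > 0"
  shows "I_d n \<mu> s \<le> (1 + eta * s^2 / real n) * I_c \<mu> s \<and> eta \<le> 0.37"
proof
  show "eta \<le> 0.37"
    by (rule eta_bounds(2))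
  define a where "a = 1 / sqrt (real n)"
  define C where "C = 1 + eta * s^2 * a^2"
  have a: "a > 0" "a^2 = 1 / real n"
    using assms by (simp_all add: a_def power_divide)
  have "C \<ge> 0"
    using eta_bounds(1) by (simp add: C_def)
  have grid: "grid_h n = 2 * a" "grid_x n k = - sqrt (real n) + 2 * real k * a" for k
    by (simp_all add: grid_h_def grid_x_def a_def)
  have "continuous_on UNIV (gauss s \<mu>)"
    by (intro continuous_intros)
  have "I_d n \<mu> s = (\<Sum>k=0..n. 2 * a * gauss s \<mu> (grid_x n k))"
    unfolding I_d_def grid(1) by (simp add: sum_distrib_left)
  also have "\<dots> \<le> C * (\<Sum>k=0..n. integral {grid_x n k - a..grid_x n k + a} (gauss s \<mu>))"
    unfolding sum_distrib_left C_def
    by (intro sum_mono cell_width_mul_gauss_le_integral a(1) assms(2) eta_bounds(1))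
  also have "\<dots> = C * integral {- sqrt (real n) - a..- sqrt (real n) + 2 * real n * a + a} (gauss s \<mu>)"
    unfolding grid(2) sum_integral_adjacent_cells[OF \<open>continuous_on UNIV (gauss s \<mu>)\<close> a(1)] ..
  also have "\<dots> \<le> C * I_c \<mu> s"
    unfolding I_c_def using \<open>C \<ge> 0\<close> assms(2)
    by (intro mult_left_mono integral_subset_le integrable_continuous_interval continuous_intros
        gauss_integrable_on_UNIV) auto
  finally show "I_d n \<mu> s \<le> (1 + eta * s^2 / real n) * I_c \<mu> s"
    by (simp add: C_def a(2))
qed

end
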